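(* Let $n\neq 0$ be an integer and let $K$ be a bicolored $n$-Eulerian cubical complex. Then the same number of vertices of $K$ are assigned each of the two colors; in particular $K$ has an even number of vertices.
   Context: A cubical poset is a poset $P$ in which every order ideal $\{z\in P: z\le x\}$ is isomorphic to a product of copies of $I$, where $I$ is the three-element face poset of an interval with the empty face excluded. A cubical complex is a (regular) cell complex whose face poset $P$ (excluding the empty face) is a cubical poset such that $P$ with a minimum and maximum adjoined is a lattice. A bicoloring assigns to each vertex one of two colors so that every edge has one endpoint of each color. The link of a vertex $v$ is the poset of faces strictly containing $v$; its Euler characteristic is the alternating sum $\sum_{i\ge 1}(-1)^{i-1}(\text{number of } i\text{-dimensional faces of } K \text{ containing } v)$. The complex $K$ is $n$-Eulerian if the link of every vertex has Euler characteristic $n$. *)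

theory Defs
  imports Main
begin

definition partial_order_on :: "'a set \<Rightarrow> ('a \<Rightarrow> 'a \<Rightarrow> bool) \<Rightarrow> bool" where
  "partial_order_on F le \<longleftrightarrow>
     (\<forall>x\<in>F. le x x) \<and>
     (\<forall>x\<in>F. \<forall>y\<in>F. le x y \<and> le y x \<longrightarrow> x = y) \<and>
     (\<forall>x\<in>F. \<forall>y\<in>F. \<forall>z\<in>F. le x y \<and> le y z \<longrightarrow> le x z)"

definition order_iso :: "('a \<Rightarrow> 'b) \<Rightarrow> 'a set \<Rightarrow> ('a \<Rightarrow> 'a \<Rightarrow> bool)
    \<Rightarrow> 'b set \<Rightarrow> ('b \<Rightarrow> 'b \<Rightarrow> bool) \<Rightarrow> bool" where
  "order_iso h A leA B leB \<longleftrightarrow>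
     bij_betw h A B \<and> (\<forall>x\<in>A. \<forall>y\<in>A. leA x y \<longleftrightarrow> leB (h x) (h y))"

text \<open>The poset I: faces 0, 1 (the endpoints) and 2 (the whole interval) of an interval,
  empty face excluded. The product of k copies of I is represented by functions
  nat => nat with values in {0,1,2} on {0..<k} and 0 elsewhere, ordered componentwise.\<close>

definition I_le :: "nat \<Rightarrow> nat \<Rightarrow> bool" where
  "I_le a b \<longleftrightarrow> a = b \<or> b = 2"

definition cube_faces :: "nat \<Rightarrow> (nat \<Rightarrow> nat) set" where
  "cube_faces k = {f. (\<forall>i<k. f i \<in> {0, 1, 2}) \<and> (\<forall>i\<ge>k. f i = 0)}"

definition cube_le :: "(nat \<Rightarrow> nat) \<Rightarrow> (nat \<Rightarrow> nat) \<Rightarrow> bool" where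
  "cube_le f g \<longleftrightarrow> (\<forall>i. I_le (f i) (g i))"

definition down_set :: "'a set \<Rightarrow> ('a \<Rightarrow> 'a \<Rightarrow> bool) \<Rightarrow> 'a \<Rightarrow> 'a set" where
  "down_set F le x = {z\<in>F. le z x}"

definition cubical_poset :: "'a set \<Rightarrow> ('a \<Rightarrow> 'a \<Rightarrow> bool) \<Rightarrow> bool" where
  "cubical_poset F le \<longleftrightarrow> partial_order_on F le \<and>
     (\<forall>x\<in>F. \<exists>k h. order_iso h (down_set F le x) le (cube_faces k) cube_le)"

definition face_dim :: "'a set \<Rightarrow> ('a \<Rightarrow> 'a \<Rightarrow> bool) \<Rightarrow> 'a \<Rightarrow> nat" where
  "face_dim F le x = (THE k. \<exists>h. order_iso h (down_set F le x) le (cube_faces k) cube_le)"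

datatype 'a ext = Bot | Elt 'a | Top

fun ext_le :: "('a \<Rightarrow> 'a \<Rightarrow> bool) \<Rightarrow> 'a ext \<Rightarrow> 'a ext \<Rightarrow> bool" where
  "ext_le le Bot _ = True"
| "ext_le le (Elt x) Bot = False"
| "ext_le le (Elt x) (Elt y) = le x y"
| "ext_le le (Elt x) Top = True"
| "ext_le le Top y = (y = Top)"

definition ext_carrier :: "'a set \<Rightarrow> 'a ext set" where
  "ext_carrier F = {Bot, Top} \<union> Elt ` F"

definition is_lattice :: "'b set \<Rightarrow> ('b \<Rightarrow> 'b \<Rightarrow> bool) \<Rightarrow> bool" where
  "is_lattice A le \<longleftrightarrow>
     (\<forall>x\<in>A. \<forall>y\<in>A.
        (\<exists>s\<in>A. le x s \<and> le y s \<and> (\<forall>u\<in>A. le x u \<and> le y u \<longrightarrow> le s u)) \<and>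
        (\<exists>m\<in>A. le m x \<and> le m y \<and> (\<forall>u\<in>A. le u x \<and> le u y \<longrightarrow> le u m)))"

text \<open>A (finite) cubical complex, given by its face poset (empty face excluded).\<close>

definition cubical_complex :: "'a set \<Rightarrow> ('a \<Rightarrow> 'a \<Rightarrow> bool) \<Rightarrow> bool" where
  "cubical_complex F le \<longleftrightarrow> finite F \<and> cubical_poset F le \<and>
     is_lattice (ext_carrier F) (ext_le le)"

definition vertices :: "'a set \<Rightarrow> ('a \<Rightarrow> 'a \<Rightarrow> bool) \<Rightarrow> 'a set" where
  "vertices F le = {x\<in>F. face_dim F le x = 0}"

definition edges :: "'a set \<Rightarrow> ('a \<Rightarrow> 'a \<Rightarrow> bool) \<Rightarrow> 'a set" where
  "edges F le = {x\<in>F. face_dim F le x = 1}"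

definition bicoloring :: "'a set \<Rightarrow> ('a \<Rightarrow> 'a \<Rightarrow> bool) \<Rightarrow> ('a \<Rightarrow> bool) \<Rightarrow> bool" where
  "bicoloring F le col \<longleftrightarrow>
     (\<forall>e\<in>edges F le. \<forall>u\<in>vertices F le. \<forall>v\<in>vertices F le.
        le u e \<and> le v e \<and> u \<noteq> v \<longrightarrow> col u \<noteq> col v)"

definition link_euler_char :: "'a set \<Rightarrow> ('a \<Rightarrow> 'a \<Rightarrow> bool) \<Rightarrow> 'a \<Rightarrow> int" where
  "link_euler_char F le v =
     (\<Sum>y\<in>{y\<in>F. le v y \<and> y \<noteq> v}. (-1) ^ (face_dim F le y - 1))"

definition n_Eulerian :: "int \<Rightarrow> 'a set \<Rightarrow> ('a \<Rightarrow> 'a \<Rightarrow> bool) \<Rightarrow> bool" where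
  "n_Eulerian n F le \<longleftrightarrow> (\<forall>v\<in>vertices F le. link_euler_char F le v = n)"

end

(* Weight every vertex by +1 or -1 according to its colour and add up the Euler
   characteristics of the links: by n-Eulerianity this is n times the difference of the
   colour classes. Expanding the links and exchanging the two sums instead gives, over all
   faces y of positive dimension, a signed sum of the colour differences among the vertices
   of y. Each such face is a cube, and flipping the first coordinate pairs its vertices
   along edges, whose endpoints the bicoloring gives different colours; so every inner sum
   vanishes, and n <> 0 forces the colour classes to have equal size. *)

theory Submission imports Defs "HOL-Library.FuncSet" begin

section \<open>The cube poset\<close>

lemma card_cube_faces: "card (cube_faces k) = 3 ^ k"
proof -
  have "bij_betw (\<lambda>f. restrict f {..<k}) (cube_faces k) (PiE {..<k} (\<lambda>_. {0,1,2::nat}))"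
  proof (rule bij_betw_byWitness[where f'="\<lambda>g i. if i < k then g i else 0"])
    show "\<forall>f\<in>cube_faces k. (\<lambda>i. if i < k then restrict f {..<k} i else 0) = f"
      unfolding cube_faces_def fun_eq_iff by (simp add: not_less)
    show "\<forall>g\<in>PiE {..<k} (\<lambda>_. {0,1,2}). restrict (\<lambda>i. if i < k then g i else 0) {..<k} = g"
      by (auto simp: PiE_def extensional_def fun_eq_iff)
    show "(\<lambda>f. restrict f {..<k}) ` cube_faces k \<subseteq> PiE {..<k} (\<lambda>_. {0,1,2})"
    proof (rule image_subsetI)
      fix f assume "f \<in> cube_faces k"
      then show "restrict f {..<k} \<in> PiE {..<k} (\<lambda>_. {0,1,2})"
        unfolding restrict_PiE_iff cube_faces_def by auto
    qed
    show "(\<lambda>g i. if i < k then g i else 0) ` PiE {..<k} (\<lambda>_. {0,1,2}) \<subseteq> cube_faces k"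
      by (auto simp: cube_faces_def PiE_def Pi_def)
  qed
  then have "card (cube_faces k) = card (PiE {..<k} (\<lambda>_. {0,1,2::nat}))"
    by (rule bij_betw_same_card)
  also have "\<dots> = 3 ^ k"
    by (simp add: card_PiE numeral_3_eq_3)
  finally show ?thesis .
qed

definition cube_vertices :: "nat \<Rightarrow> (nat \<Rightarrow> nat) set" where
  "cube_vertices k = {g \<in> cube_faces k. \<forall>i. g i \<noteq> 2}"

lemma cube_down_set_eq_singleton_iff:
  assumes "g \<in> cube_faces k"
  shows "{g' \<in> cube_faces k. cube_le g' g} = {g} \<longleftrightarrow> g \<in> cube_vertices k"
proof
  assume down: "{g' \<in> cube_faces k. cube_le g' g} = {g}"
  show "g \<in> cube_vertices k"
  proof (rule ccontr)
    assume "g \<notin> cube_vertices k"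
    then obtain i where i: "g i = 2"
      using assms by (auto simp: cube_vertices_def)
    have "g(i := 0) \<in> cube_faces k" "cube_le (g(i := 0)) g"
      using assms i by (auto simp: cube_faces_def cube_le_def I_le_def)
    with down have "g(i := 0) = g"
      by blast
    with i show False
      by (metis fun_upd_same zero_neq_numeral)
  qed
next
  assume "g \<in> cube_vertices k"
  then show "{g' \<in> cube_faces k. cube_le g' g} = {g}"
    by (auto simp: cube_vertices_def cube_le_def I_le_def fun_eq_iff)
qed

lemma cube_vertex_coordinate:
  assumes "g \<in> cube_vertices k"
  shows "g i = 0 \<or> g i = 1"
  using assms by (cases "i < k") (auto simp: cube_vertices_def cube_faces_def)

text \<open>On a vertex g this is the other endpoint of the edge g(0 := 2); on other faces the
  truncated subtraction makes it meaningless.\<close>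

definition cube_flip :: "(nat \<Rightarrow> nat) \<Rightarrow> nat \<Rightarrow> nat" where
  "cube_flip g = g(0 := 1 - g 0)"

lemma cube_flip_vertex:
  assumes "0 < k" "g \<in> cube_vertices k"
  shows "cube_flip g \<in> cube_vertices k"
  using assms cube_vertex_coordinate[OF assms(2), of 0]
  by (auto simp: cube_vertices_def cube_faces_def cube_flip_def)

lemma cube_flip_flip:
  assumes "g \<in> cube_vertices k"
  shows "cube_flip (cube_flip g) = g"
  using cube_vertex_coordinate[OF assms, of 0] by (auto simp: cube_flip_def fun_eq_iff)

lemma cube_flip_neq:
  assumes "g \<in> cube_vertices k"
  shows "cube_flip g \<noteq> g"
  using cube_vertex_coordinate[OF assms, of 0] by (auto simp: cube_flip_def fun_eq_iff)

lemma cube_edge_down_set: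
  assumes "0 < k" "g \<in> cube_vertices k"
  shows "{g' \<in> cube_faces k. cube_le g' (g(0 := 2))} = {g, cube_flip g, g(0 := 2)}"
proof -
  have "g' \<in> {g, cube_flip g, g(0 := 2)}"
    if "g' \<in> cube_faces k" "cube_le g' (g(0 := 2))" for g'
  proof -
    have same: "g' i = g i" if "i \<noteq> 0" for i
    proof -
      have "I_le (g' i) (g i)"
        using \<open>cube_le g' (g(0 := 2))\<close> \<open>i \<noteq> 0\<close> unfolding cube_le_def by (metis fun_upd_other)
      with assms(2) show ?thesis
        by (auto simp: I_le_def cube_vertices_def)
    qed
    then have g': "g' = g(0 := c)" if "g' 0 = c" for c
      using that by (auto simp: fun_eq_iff)
    have "g' 0 \<in> {0, 1, 2}"
      using \<open>g' \<in> cube_faces k\<close> assms(1) by (auto simp: cube_faces_def)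
    then consider "g' 0 = g 0" | "g' 0 = 1 - g 0" | "g' 0 = 2"
      using cube_vertex_coordinate[OF assms(2), of 0] by auto
    then show ?thesis
      by cases (use g' in \<open>auto simp: cube_flip_def\<close>)
  qed
  moreover have "{g, cube_flip g, g(0 := 2)} \<subseteq> cube_faces k"
    using assms cube_flip_vertex[OF assms] by (auto simp: cube_faces_def cube_vertices_def)
  moreover have "\<forall>g'\<in>{g, cube_flip g, g(0 := 2)}. cube_le g' (g(0 := 2))"
    by (auto simp: cube_flip_def cube_le_def I_le_def)
  ultimately show ?thesis
    by blast
qed

lemma card_cube_edge_down_set:
  assumes "0 < k" "g \<in> cube_vertices k"
  shows "card {g' \<in> cube_faces k. cube_le g' (g(0 := 2))} = 3"
proof -
  have "g \<noteq> g(0 := 2)" "cube_flip g \<noteq> g(0 := 2)"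
    using cube_vertex_coordinate[OF assms(2), of 0] by (auto simp: cube_flip_def fun_eq_iff)
  with cube_flip_neq[OF assms(2)] show ?thesis
    unfolding cube_edge_down_set[OF assms] by auto
qed

section \<open>Cubical posets\<close>

lemma face_dim_eqI:
  assumes "order_iso h (down_set F le x) le (cube_faces k) cube_le"
  shows "face_dim F le x = k"
  unfolding face_dim_def
proof (rule the_equality)
  show "\<exists>h. order_iso h (down_set F le x) le (cube_faces k) cube_le"
    using assms by blast
next
  fix k' assume "\<exists>h. order_iso h (down_set F le x) le (cube_faces k') cube_le"
  then have "card (down_set F le x) = 3 ^ k'"
    unfolding order_iso_def by (metis bij_betw_same_card card_cube_faces)
  moreover have "card (down_set F le x) = 3 ^ k"
    using assms unfolding order_iso_def by (metis bij_betw_same_card card_cube_faces)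
  ultimately show "k' = k"
    by simp
qed

lemma card_down_set:
  assumes "cubical_poset F le" "x \<in> F"
  shows "card (down_set F le x) = 3 ^ face_dim F le x"
proof -
  obtain k h where h: "order_iso h (down_set F le x) le (cube_faces k) cube_le"
    using assms unfolding cubical_poset_def by blast
  then have "face_dim F le x = k"
    by (rule face_dim_eqI)
  with h show ?thesis
    unfolding order_iso_def by (metis bij_betw_same_card card_cube_faces)
qed

lemma finite_down_set:
  assumes "cubical_poset F le" "x \<in> F"
  shows "finite (down_set F le x)"
  using card_down_set[OF assms] by (intro card_ge_0_finite) simp

lemma vertices_iff_down_set:
  assumes "cubical_poset F le"
  shows "x \<in> vertices F le \<longleftrightarrow> x \<in> F \<and> down_set F le x = {x}"
proof (cases "x \<in> F")
  case True
  then have "x \<in> down_set F le x"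
    using assms by (auto simp: down_set_def cubical_poset_def partial_order_on_def)
  then have "down_set F le x = {x} \<longleftrightarrow> card (down_set F le x) = 1"
    by (auto simp: card_1_singleton_iff)
  also have "\<dots> \<longleftrightarrow> face_dim F le x = 0"
    by (simp add: card_down_set[OF assms True])
  finally show ?thesis
    using True by (simp add: vertices_def)
qed (simp add: vertices_def)

lemma edgesI:
  assumes "cubical_poset F le" "x \<in> F" "card (down_set F le x) = 3"
  shows "x \<in> edges F le"
proof -
  have "face_dim F le x = 1"
    using card_down_set[OF assms(1,2)] assms(3) power_inject_exp[of "3::nat" _ 1] by simp
  then show ?thesis
    using assms(2) by (simp add: edges_def)
qed

lemma order_iso_the_inv_into:
  assumes "order_iso h A leA B leB"
  shows "order_iso (the_inv_into A h) B leB A leA"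
proof -
  have bij: "bij_betw h A B"
    using assms by (simp add: order_iso_def)
  have "leB x y \<longleftrightarrow> leA (the_inv_into A h x) (the_inv_into A h y)" if "x \<in> B" "y \<in> B" for x y
    using assms that bij_betw_the_inv_into[OF bij] f_the_inv_into_f_bij_betw[OF bij]
    unfolding order_iso_def by (metis bij_betwE)
  then show ?thesis
    using bij_betw_the_inv_into[OF bij] by (simp add: order_iso_def)
qed

lemma down_set_mono:
  assumes "partial_order_on F le" "x \<in> down_set F le y" "y \<in> F"
  shows "down_set F le x \<subseteq> down_set F le y"
  using assms unfolding down_set_def partial_order_on_def by blast

lemma card_eq_by_involution:
  assumes "\<And>x. x \<in> S \<Longrightarrow> f x \<in> S" "\<And>x. x \<in> S \<Longrightarrow> f (f x) = x"
    and "\<And>x. x \<in> S \<Longrightarrow> P (f x) \<longleftrightarrow> \<not> P x"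
  shows "card {x \<in> S. P x} = card {x \<in> S. \<not> P x}"
proof (rule bij_betw_same_card)
  show "bij_betw f {x \<in> S. P x} {x \<in> S. \<not> P x}"
    by (rule bij_betw_byWitness[where f' = f]) (use assms in auto)
qed

section \<open>Colour classes below a face\<close>

locale cube_chart =
  fixes F :: "'a set" and le :: "'a \<Rightarrow> 'a \<Rightarrow> bool" and y :: 'a
    and k :: nat and \<phi> :: "(nat \<Rightarrow> nat) \<Rightarrow> 'a"
  assumes cubical: "cubical_poset F le"
    and face: "y \<in> F"
    and chart: "order_iso \<phi> (cube_faces k) cube_le (down_set F le y) le"
begin

lemma chart_bij: "bij_betw \<phi> (cube_faces k) (down_set F le y)"
  using chart by (simp add: order_iso_def)

lemma chart_inj: "inj_on \<phi> (cube_faces k)"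
  using chart_bij by (rule bij_betw_imp_inj_on)

lemma chart_le_iff:
  "c \<in> cube_faces k \<Longrightarrow> c' \<in> cube_faces k \<Longrightarrow> le (\<phi> c') (\<phi> c) \<longleftrightarrow> cube_le c' c"
  using chart by (simp add: order_iso_def)

lemma chart_below_face: "c \<in> cube_faces k \<Longrightarrow> \<phi> c \<in> F \<and> le (\<phi> c) y"
  using bij_betwE[OF chart_bij] by (auto simp: down_set_def)

lemma down_set_chart:
  assumes "c \<in> cube_faces k"
  shows "down_set F le (\<phi> c) = \<phi> ` {c' \<in> cube_faces k. cube_le c' c}"
proof -
  have "down_set F le (\<phi> c) \<subseteq> \<phi> ` cube_faces k"
    using down_set_mono[of F le "\<phi> c" y] cubical face chart_below_face[OF assms]
      bij_betw_imp_surj_on[OF chart_bij]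
    by (auto simp: cubical_poset_def down_set_def)
  then show ?thesis
    using assms chart_le_iff chart_below_face by (auto simp: down_set_def)
qed

lemma chart_vertex_iff:
  assumes "c \<in> cube_faces k"
  shows "\<phi> c \<in> vertices F le \<longleftrightarrow> c \<in> cube_vertices k"
proof -
  have "\<phi> c \<in> vertices F le \<longleftrightarrow> \<phi> ` {c' \<in> cube_faces k. cube_le c' c} = \<phi> ` {c}"
    using vertices_iff_down_set[OF cubical] chart_below_face[OF assms] down_set_chart[OF assms]
    by simp
  also have "\<dots> \<longleftrightarrow> {c' \<in> cube_faces k. cube_le c' c} = {c}"
    using assms by (intro inj_on_image_eq_iff[OF chart_inj]) auto
  also have "\<dots> \<longleftrightarrow> c \<in> cube_vertices k"
    using assms by (rule cube_down_set_eq_singleton_iff)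
  finally show ?thesis .
qed

lemma vertices_below_face: "{v \<in> vertices F le. le v y} = \<phi> ` cube_vertices k"
proof -
  have "{v \<in> vertices F le. le v y} = {v \<in> down_set F le y. v \<in> vertices F le}"
    by (auto simp: down_set_def vertices_def)
  also have "\<dots> = {v \<in> \<phi> ` cube_faces k. v \<in> vertices F le}"
    using bij_betw_imp_surj_on[OF chart_bij] by simp
  also have "\<dots> = \<phi> ` cube_vertices k"
    using chart_vertex_iff by (auto simp: cube_vertices_def)
  finally show ?thesis .
qed

lemma colour_cube_flip:
  assumes "bicoloring F le col" "0 < k" "g \<in> cube_vertices k"
  shows "col (\<phi> (cube_flip g)) \<noteq> col (\<phi> g)"
proof -
  let ?E = "{g' \<in> cube_faces k. cube_le g' (g(0 := 2))}"
  have in_E: "g \<in> ?E" "cube_flip g \<in> ?E" "g(0 := 2) \<in> ?E"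
    using cube_edge_down_set[OF assms(2,3)] by auto
  have "card (down_set F le (\<phi> (g(0 := 2)))) = card ?E"
    unfolding down_set_chart[OF CollectD[OF in_E(3), THEN conjunct1]]
    by (rule card_image, rule inj_on_subset[OF chart_inj]) auto
  then have edge: "\<phi> (g(0 := 2)) \<in> edges F le"
    using edgesI[OF cubical] chart_below_face in_E(3) card_cube_edge_down_set[OF assms(2,3)]
    by auto
  have "le (\<phi> g) (\<phi> (g(0 := 2)))" "le (\<phi> (cube_flip g)) (\<phi> (g(0 := 2)))"
    using in_E chart_le_iff by auto
  moreover have "\<phi> g \<in> vertices F le" "\<phi> (cube_flip g) \<in> vertices F le"
    using in_E chart_vertex_iff assms(3) cube_flip_vertex[OF assms(2,3)] by auto
  moreover have "\<phi> (cube_flip g) \<noteq> \<phi> g"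
    using in_E cube_flip_neq[OF assms(3)] inj_onD[OF chart_inj] by auto
  ultimately show ?thesis
    using assms(1) edge unfolding bicoloring_def by blast
qed

lemma card_colour_classes_eq:
  assumes "bicoloring F le col" "0 < k"
  shows "card {v \<in> vertices F le. le v y \<and> col v} = card {v \<in> vertices F le. le v y \<and> \<not> col v}"
proof -
  have classes: "card {v \<in> vertices F le. le v y \<and> P (col v)} = card {g \<in> cube_vertices k. P (col (\<phi> g))}"
    for P
  proof -
    have "{v \<in> vertices F le. le v y \<and> P (col v)} = {v \<in> {v \<in> vertices F le. le v y}. P (col v)}"
      by auto
    also have "\<dots> = \<phi> ` {g \<in> cube_vertices k. P (col (\<phi> g))}"
      unfolding vertices_below_face by auto
    finally show ?thesis
      by (simp add: card_image inj_on_subset[OF chart_inj] cube_vertices_def)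
  qed
  have "card {g \<in> cube_vertices k. col (\<phi> g)} = card {g \<in> cube_vertices k. \<not> col (\<phi> g)}"
    using cube_flip_vertex[OF assms(2)] cube_flip_flip colour_cube_flip[OF assms]
    by (intro card_eq_by_involution[where f = cube_flip]) auto
  then show ?thesis
    using classes[of "\<lambda>b. b"] classes[of Not] by simp
qed

end

lemma card_colour_classes_below_face:
  assumes "cubical_poset F le" "bicoloring F le col" "y \<in> F" "y \<notin> vertices F le"
  shows "card {v \<in> vertices F le. le v y \<and> col v} = card {v \<in> vertices F le. le v y \<and> \<not> col v}"
proof -
  obtain k h where h: "order_iso h (down_set F le y) le (cube_faces k) cube_le"
    using assms(1,3) unfolding cubical_poset_def by blast
  have "0 < k"
    using face_dim_eqI[OF h] assms(3,4) by (simp add: vertices_def)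
  interpret cube_chart F le y k "the_inv_into (down_set F le y) h"
    using assms(1,3) order_iso_the_inv_into[OF h] by unfold_locales
  show ?thesis
    using assms(2) \<open>0 < k\<close> by (rule card_colour_classes_eq)
qed

section \<open>Signed vertex counts\<close>

definition colour_sign :: "('a \<Rightarrow> bool) \<Rightarrow> 'a \<Rightarrow> int" where
  "colour_sign col v = (if col v then 1 else -1)"

lemma sum_colour_sign:
  assumes "finite S"
  shows "(\<Sum>v\<in>S. colour_sign col v) = int (card {v \<in> S. col v}) - int (card {v \<in> S. \<not> col v})"
proof -
  have "(\<Sum>v\<in>S. colour_sign col v) = (\<Sum>v\<in>S \<inter> {v. col v}. 1) + (\<Sum>v\<in>S \<inter> - {v. col v}. -1)"
    unfolding colour_sign_def by (rule sum.If_cases[OF assms])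
  moreover have "S \<inter> {v. col v} = {v \<in> S. col v}" "S \<inter> - {v. col v} = {v \<in> S. \<not> col v}"
    by auto
  ultimately show ?thesis
    by simp
qed

lemma sum_colour_sign_below_face:
  assumes "cubical_poset F le" "bicoloring F le col" "y \<in> F"
  shows "(\<Sum>v\<in>{v \<in> vertices F le. le v y \<and> y \<noteq> v}. colour_sign col v) = 0"
proof (cases "y \<in> vertices F le")
  case True
  then have "down_set F le y = {y}"
    using vertices_iff_down_set[OF assms(1)] by blast
  then have "{v \<in> vertices F le. le v y \<and> y \<noteq> v} = {}"
    by (auto simp: vertices_def down_set_def)
  then show ?thesis
    by (simp only: sum.empty)
next
  case False
  then have "{v \<in> vertices F le. le v y \<and> y \<noteq> v} = {v \<in> vertices F le. le v y}"
    by auto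
  moreover have "finite {v \<in> vertices F le. le v y}"
    using finite_down_set[OF assms(1,3)]
    by (rule finite_subset[rotated]) (auto simp: down_set_def vertices_def)
  ultimately show ?thesis
    using card_colour_classes_below_face[OF assms False] by (simp add: sum_colour_sign)
qed

lemma sum_colour_sign_mult_link_euler_char:
  assumes "finite F" "cubical_poset F le" "bicoloring F le col"
  shows "(\<Sum>v\<in>vertices F le. colour_sign col v * link_euler_char F le v) = 0"
proof -
  let ?s = "colour_sign col" and ?c = "\<lambda>y. (-1::int) ^ (face_dim F le y - 1)"
  have "finite (vertices F le)"
    using assms(1) by (simp add: vertices_def)
  have "(\<Sum>v\<in>vertices F le. ?s v * link_euler_char F le v)
      = (\<Sum>v\<in>vertices F le. \<Sum>y\<in>{y \<in> F. le v y \<and> y \<noteq> v}. ?s v * ?c y)"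
    by (simp add: link_euler_char_def sum_distrib_left)
  also have "\<dots> = (\<Sum>y\<in>F. \<Sum>v\<in>{v \<in> vertices F le. le v y \<and> y \<noteq> v}. ?s v * ?c y)"
    using \<open>finite (vertices F le)\<close> assms(1) by (rule sum.swap_restrict)
  also have "\<dots> = (\<Sum>y\<in>F. ?c y * (\<Sum>v\<in>{v \<in> vertices F le. le v y \<and> y \<noteq> v}. ?s v))"
    by (simp add: sum_distrib_left mult.commute)
  also have "\<dots> = 0"
    using sum_colour_sign_below_face[OF assms(2,3)] by simp
  finally show ?thesis .
qed

theorem theorem2p2:
  fixes F :: "'a set" and le :: "'a \<Rightarrow> 'a \<Rightarrow> bool" and col :: "'a \<Rightarrow> bool" and n :: int
  assumes "n \<noteq> 0"
    and "cubical_complex F le"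
    and "bicoloring F le col"
    and "n_Eulerian n F le"
  shows "card {v\<in>vertices F le. col v} = card {v\<in>vertices F le. \<not> col v}
         \<and> even (card (vertices F le))"
proof -
  let ?V = "vertices F le"
  have F: "finite F" "cubical_poset F le"
    using assms(2) by (auto simp: cubical_complex_def)
  then have "finite ?V"
    by (simp add: vertices_def)
  have "n * (\<Sum>v\<in>?V. colour_sign col v) = (\<Sum>v\<in>?V. colour_sign col v * link_euler_char F le v)"
    using assms(4) by (simp add: n_Eulerian_def sum_distrib_left mult.commute)
  also have "\<dots> = 0"
    using F assms(3) by (rule sum_colour_sign_mult_link_euler_char)
  finally have "(\<Sum>v\<in>?V. colour_sign col v) = 0"
    using assms(1) by simp
  then have balanced: "card {v \<in> ?V. col v} = card {v \<in> ?V. \<not> col v}"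
    using sum_colour_sign[OF \<open>finite ?V\<close>] by simp
  have "card ?V = card {v \<in> ?V. col v} + card {v \<in> ?V. \<not> col v}"
    using \<open>finite ?V\<close> by (subst card_Un_disjoint[symmetric]) (auto intro: arg_cong[where f = card])
  with balanced show ?thesis
    by simp
qed

end
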